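(* Let $\mu\in(0,1/2)$. For every $c<c_J$ the rotation number of the exterior collision orbit in the Moon component is greater than that in the Earth component: $R^E_{\text{ext}}(c)<R^M_{\text{ext}}(c)$.
   Context: $c_J=-1-2\sqrt{\mu(1-\mu)}$. $K(k)=\int_0^{\pi/2}(1-k^2\sin^2\theta)^{-1/2}d\theta$ is the complete elliptic integral of the first kind. $R^E_{\text{ext}}(c)=\frac{\pi}{2}\frac{1}{\sqrt{1-2k_E^2}K(k_E)}$ with $k_E^2=\frac12\big(1-\frac{1-2\mu-c}{\sqrt{c^2-2(1-2\mu)c+1}}\big)$, and $R^M_{\text{ext}}(c)=\frac{\pi}{2}\frac{1}{\sqrt{1-2k_M^2}K(k_M)}$ with $k_M^2=\frac12\big(1+\frac{c+1-2\mu}{\sqrt{c^2+2(1-2\mu)c+1}}\big)$; these are the ratios of $\eta$- to $\xi$-oscillation periods of the exterior collision orbits of the Euler problem (mass ratio $\mu$) near the Earth and near the Moon, respectively. *)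

theory Defs
  imports "HOL-Analysis.Analysis"
begin

definition elliptic_K :: "real \<Rightarrow> real" where
  "elliptic_K k = integral {0..pi/2} (\<lambda>\<theta>. 1 / sqrt (1 - k^2 * (sin \<theta>)^2))"

definition c_J :: "real \<Rightarrow> real" where
  "c_J \<mu> = -1 - 2 * sqrt (\<mu> * (1 - \<mu>))"

definition kE_sq :: "real \<Rightarrow> real \<Rightarrow> real" where
  "kE_sq \<mu> c = (1 - (1 - 2*\<mu> - c) / sqrt (c^2 - 2*(1 - 2*\<mu>)*c + 1)) / 2"

definition kM_sq :: "real \<Rightarrow> real \<Rightarrow> real" where
  "kM_sq \<mu> c = (1 + (c + 1 - 2*\<mu>) / sqrt (c^2 + 2*(1 - 2*\<mu>)*c + 1)) / 2"

definition R_E_ext :: "real \<Rightarrow> real \<Rightarrow> real" where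
  "R_E_ext \<mu> c = (pi/2) / (sqrt (1 - 2 * kE_sq \<mu> c) * elliptic_K (sqrt (kE_sq \<mu> c)))"

definition R_M_ext :: "real \<Rightarrow> real \<Rightarrow> real" where
  "R_M_ext \<mu> c = (pi/2) / (sqrt (1 - 2 * kM_sq \<mu> c) * elliptic_K (sqrt (kM_sq \<mu> c)))"

end

theory Submission
  imports Defs
begin

text \<open>Writing \<open>a = 1 - 2\<mu>\<close>, \<open>t = -c\<close> and \<open>\<phi> x = x / sqrt (x\<^sup>2 + 1 - a\<^sup>2)\<close>, the two moduli are
  \<open>k\<^sub>E\<^sup>2 = (1 - \<phi> (t + a)) / 2\<close> and \<open>k\<^sub>M\<^sup>2 = (1 - \<phi> (t - a)) / 2\<close>. Below the critical energy
  \<open>t - a > 0\<close>, and since \<open>\<phi>\<close> is increasing with values below 1 we get \<open>0 < k\<^sub>E\<^sup>2 < k\<^sub>M\<^sup>2 < 1/2\<close>.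
  It remains to see that the denominator \<open>sqrt (1 - 2m) K(sqrt m)\<close> of the rotation number
  strictly decreases in \<open>m\<close> on \<open>[0, 1/2)\<close>: it is the product of the strictly decreasing
  factor \<open>sqrt ((1 - 2m) / (1 - m))\<close> and \<open>sqrt (1 - m) K(sqrt m)\<close>, whose integrand
  \<open>sqrt ((1 - m) / (1 - m sin\<^sup>2 \<theta>))\<close> is pointwise nonincreasing in \<open>m\<close>.\<close>

lemma sin_sq_le_one:
  fixes \<theta> :: real
  shows "(sin \<theta>)\<^sup>2 \<le> 1"
  by (simp add: abs_square_le_1)

lemma one_minus_mult_sin_sq_pos:
  fixes m \<theta> :: real
  assumes "m < 1"
  shows "0 < 1 - m * (sin \<theta>)\<^sup>2"
proof (cases "m \<le> 0")
  case True
  then have "m * (sin \<theta>)\<^sup>2 \<le> 0" by (simp add: mult_nonpos_nonneg)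
  then show ?thesis by linarith
next
  case False
  then have "m * (sin \<theta>)\<^sup>2 \<le> m" by (simp add: mult_left_le sin_sq_le_one)
  with assms show ?thesis by linarith
qed

lemma elliptic_K_sqrt:
  assumes "0 \<le> m"
  shows "elliptic_K (sqrt m) = integral {0..pi/2} (\<lambda>\<theta>. 1 / sqrt (1 - m * (sin \<theta>)\<^sup>2))"
  using assms by (simp add: elliptic_K_def)

lemma elliptic_integrand_integrable:
  fixes m :: real
  assumes "m < 1"
  shows "(\<lambda>\<theta>. 1 / sqrt (1 - m * (sin \<theta>)\<^sup>2)) integrable_on {0..pi/2}"
proof (rule integrable_continuous_interval)
  have "1 - m * (sin \<theta>)\<^sup>2 \<noteq> 0" for \<theta>
    using one_minus_mult_sin_sq_pos[OF assms] by (metis less_irrefl)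
  then show "continuous_on {0..pi/2} (\<lambda>\<theta>. 1 / sqrt (1 - m * (sin \<theta>)\<^sup>2))"
    by (intro continuous_intros) simp
qed

lemma elliptic_K_ge_pi_half:
  assumes "0 \<le> m" "m < 1"
  shows "pi/2 \<le> elliptic_K (sqrt m)"
proof -
  have "integral {0..pi/2} (\<lambda>\<theta>. 1::real) \<le> integral {0..pi/2} (\<lambda>\<theta>. 1 / sqrt (1 - m * (sin \<theta>)\<^sup>2))"
  proof (rule integral_le)
    fix \<theta> :: real
    have "0 < 1 - m * (sin \<theta>)\<^sup>2" "1 - m * (sin \<theta>)\<^sup>2 \<le> 1"
      using one_minus_mult_sin_sq_pos[OF assms(2)] assms(1) by auto
    then show "1 \<le> 1 / sqrt (1 - m * (sin \<theta>)\<^sup>2)"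
      by (simp add: field_simps)
  qed (use elliptic_integrand_integrable[OF assms(2)] in auto)
  then show ?thesis
    using elliptic_K_sqrt[OF assms(1)] by simp
qed

lemma elliptic_K_pos:
  assumes "0 \<le> m" "m < 1"
  shows "0 < elliptic_K (sqrt m)"
  using elliptic_K_ge_pi_half[OF assms] pi_gt_zero by linarith

lemma rotation_denominator_pos:
  assumes "0 \<le> m" "m < 1/2"
  shows "0 < sqrt (1 - 2*m) * elliptic_K (sqrt m)"
  using elliptic_K_pos[of m] assms by simp

lemma sqrt_one_minus_mult_elliptic_K_antimono:
  assumes "0 \<le> m\<^sub>1" "m\<^sub>1 \<le> m\<^sub>2" "m\<^sub>2 < 1"
  shows "sqrt (1 - m\<^sub>2) * elliptic_K (sqrt m\<^sub>2) \<le> sqrt (1 - m\<^sub>1) * elliptic_K (sqrt m\<^sub>1)"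
proof -
  have integrand_antimono:
    "sqrt (1 - m\<^sub>2) * (1 / sqrt (1 - m\<^sub>2 * s)) \<le> sqrt (1 - m\<^sub>1) * (1 / sqrt (1 - m\<^sub>1 * s))"
    if "0 \<le> s" "s \<le> 1" for s :: real
  proof -
    have "m\<^sub>1 * s \<le> m\<^sub>1" "m\<^sub>2 * s \<le> m\<^sub>2"
      using that assms by (simp_all add: mult_left_le)
    then have pos: "0 < 1 - m\<^sub>1 * s" "0 < 1 - m\<^sub>2 * s"
      using assms by linarith+
    have "(1 - m\<^sub>2) * (1 - m\<^sub>1 * s) \<le> (1 - m\<^sub>1) * (1 - m\<^sub>2 * s)"
      using mult_left_mono[of m\<^sub>1 m\<^sub>2 "1 - s"] that assms by (simp add: algebra_simps)
    then have "(1 - m\<^sub>2) / (1 - m\<^sub>2 * s) \<le> (1 - m\<^sub>1) / (1 - m\<^sub>1 * s)"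
      using pos by (simp add: divide_simps)
    then have "sqrt ((1 - m\<^sub>2) / (1 - m\<^sub>2 * s)) \<le> sqrt ((1 - m\<^sub>1) / (1 - m\<^sub>1 * s))"
      by simp
    then show ?thesis
      by (simp add: real_sqrt_divide)
  qed
  have "integral {0..pi/2} (\<lambda>\<theta>. sqrt (1 - m\<^sub>2) * (1 / sqrt (1 - m\<^sub>2 * (sin \<theta>)\<^sup>2)))
      \<le> integral {0..pi/2} (\<lambda>\<theta>. sqrt (1 - m\<^sub>1) * (1 / sqrt (1 - m\<^sub>1 * (sin \<theta>)\<^sup>2)))"
    using assms
    by (intro integral_le integrable_on_mult_right elliptic_integrand_integrable
        integrand_antimono sin_sq_le_one) auto
  then show ?thesis
    using assms unfolding integral_mult_right
    by (simp only: elliptic_K_sqrt order_trans[OF assms(1,2)])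
qed

lemma rotation_denominator_strict_antimono:
  assumes "0 \<le> m\<^sub>1" "m\<^sub>1 < m\<^sub>2" "m\<^sub>2 < 1/2"
  shows "sqrt (1 - 2*m\<^sub>2) * elliptic_K (sqrt m\<^sub>2) < sqrt (1 - 2*m\<^sub>1) * elliptic_K (sqrt m\<^sub>1)"
proof -
  define f where "f m = sqrt ((1 - 2*m) / (1 - m))" for m :: real
  define g where "g m = sqrt (1 - m) * elliptic_K (sqrt m)" for m :: real
  have factor: "sqrt (1 - 2*m) * elliptic_K (sqrt m) = f m * g m" if "m < 1/2" for m
    using that by (simp add: f_def g_def real_sqrt_divide)
  have "(1 - 2*m\<^sub>2) * (1 - m\<^sub>1) < (1 - 2*m\<^sub>1) * (1 - m\<^sub>2)"
    using assms by (simp add: algebra_simps)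
  then have "(1 - 2*m\<^sub>2) / (1 - m\<^sub>2) < (1 - 2*m\<^sub>1) / (1 - m\<^sub>1)"
    using assms by (simp add: frac_less_eq divide_neg_pos)
  then have f_less: "f m\<^sub>2 < f m\<^sub>1"
    unfolding f_def by (rule real_sqrt_less_mono)
  have g_le: "g m\<^sub>2 \<le> g m\<^sub>1"
    unfolding g_def using assms by (intro sqrt_one_minus_mult_elliptic_K_antimono) auto
  have g_pos: "0 < g m\<^sub>2"
    using elliptic_K_pos[of m\<^sub>2] assms by (simp add: g_def)
  have "f m\<^sub>2 * g m\<^sub>2 < f m\<^sub>1 * g m\<^sub>2"
    using f_less g_pos by (rule mult_strict_right_mono)
  also have "\<dots> \<le> f m\<^sub>1 * g m\<^sub>1"
    using g_le assms by (intro mult_left_mono) (simp_all add: f_def)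
  finally show ?thesis
    using assms by (simp add: factor)
qed

lemma div_sqrt_sq_add_less_one:
  fixes x b :: real
  assumes "0 < b"
  shows "x / sqrt (x\<^sup>2 + b) < 1"
proof -
  have "x < sqrt (x\<^sup>2 + b)"
    using assms by (intro real_less_rsqrt) simp
  moreover have "0 < sqrt (x\<^sup>2 + b)"
    using assms by (simp add: add_nonneg_pos)
  ultimately show ?thesis by simp
qed

lemma div_sqrt_sq_add_strict_mono:
  fixes x y b :: real
  assumes "0 < b" "0 \<le> x" "x < y"
  shows "x / sqrt (x\<^sup>2 + b) < y / sqrt (y\<^sup>2 + b)"
proof -
  have pos: "0 < x\<^sup>2 + b" "0 < y\<^sup>2 + b"
    using assms by (simp_all add: add_nonneg_pos)
  have "x\<^sup>2 < y\<^sup>2"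
    using assms by (simp add: power_strict_mono)
  then have "x\<^sup>2 * (y\<^sup>2 + b) < y\<^sup>2 * (x\<^sup>2 + b)"
    using assms by (simp add: algebra_simps)
  then have "x\<^sup>2 / (x\<^sup>2 + b) < y\<^sup>2 / (y\<^sup>2 + b)"
    using pos by (simp add: divide_simps)
  then have "sqrt (x\<^sup>2 / (x\<^sup>2 + b)) < sqrt (y\<^sup>2 / (y\<^sup>2 + b))"
    by simp
  then show ?thesis
    using assms by (simp add: real_sqrt_divide)
qed

lemma kE_kM_sq_ordered:
  fixes \<mu> c :: real
  assumes "0 < \<mu>" and "\<mu> < 1/2" and "c < c_J \<mu>"
  shows "0 \<le> kE_sq \<mu> c" and "kE_sq \<mu> c < kM_sq \<mu> c" and "kM_sq \<mu> c < 1/2"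
proof -
  define a where "a = 1 - 2*\<mu>"
  define t where "t = - c"
  define \<phi> where "\<phi> x = x / sqrt (x\<^sup>2 + (1 - a\<^sup>2))" for x
  have a: "0 < a" "a < 1" and b: "0 < 1 - a\<^sup>2"
    using assms(1,2) by (auto simp: a_def abs_square_less_1)
  have "c_J \<mu> < -1"
    using assms(1,2) by (simp add: c_J_def)
  then have t: "1 < t"
    using assms(3) by (simp add: t_def)
  have "c\<^sup>2 - 2*(1 - 2*\<mu>)*c + 1 = (t + a)\<^sup>2 + (1 - a\<^sup>2)"
    "c\<^sup>2 + 2*(1 - 2*\<mu>)*c + 1 = (t - a)\<^sup>2 + (1 - a\<^sup>2)"
    by (simp_all add: a_def t_def power2_eq_square algebra_simps)
  moreover have "1 - 2*\<mu> - c = t + a" "c + 1 - 2*\<mu> = - (t - a)"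
    by (simp_all add: a_def t_def)
  ultimately have kE: "kE_sq \<mu> c = (1 - \<phi> (t + a)) / 2"
    and kM: "kM_sq \<mu> c = (1 - \<phi> (t - a)) / 2"
    unfolding kE_sq_def kM_sq_def \<phi>_def by (simp_all add: minus_divide_left)
  have "\<phi> (t - a) < \<phi> (t + a)"
    using a t b unfolding \<phi>_def by (intro div_sqrt_sq_add_strict_mono) auto
  moreover have "\<phi> (t + a) < 1"
    using b unfolding \<phi>_def by (rule div_sqrt_sq_add_less_one)
  moreover have "0 < \<phi> (t - a)"
    using a t b unfolding \<phi>_def by (intro divide_pos_pos) (auto simp: add_nonneg_pos)
  ultimately show "0 \<le> kE_sq \<mu> c" "kE_sq \<mu> c < kM_sq \<mu> c" "kM_sq \<mu> c < 1/2"
    unfolding kE kM by auto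
qed

theorem mainTheorem8:
  fixes \<mu> c :: real
  assumes "0 < \<mu>" and "\<mu> < 1/2" and "c < c_J \<mu>"
  shows "R_E_ext \<mu> c < R_M_ext \<mu> c"
proof -
  note moduli = kE_kM_sq_ordered[OF assms]
  have "sqrt (1 - 2 * kM_sq \<mu> c) * elliptic_K (sqrt (kM_sq \<mu> c))
      < sqrt (1 - 2 * kE_sq \<mu> c) * elliptic_K (sqrt (kE_sq \<mu> c))"
    using moduli by (rule rotation_denominator_strict_antimono)
  moreover have "0 < sqrt (1 - 2 * kM_sq \<mu> c) * elliptic_K (sqrt (kM_sq \<mu> c))"
    using moduli by (intro rotation_denominator_pos) auto
  ultimately show ?thesis
    unfolding R_E_ext_def R_M_ext_def by (intro divide_strict_left_mono) auto
qed

end
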